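(* Let $\mathrm P$ be a probability measure on $\mathbb{R}^d$ with Lebesgue density $p$ supported on the convex open set $\mathcal X\subseteq\mathbb{R}^d$, and assume $p$ satisfies Assumption A. Let $\varphi$ be as in the context. Then $\partial\varphi(\mathcal X)\cap\mathbb S_{d-1}=\emptyset$, i.e. no subgradient of $\varphi$ at a point of $\mathcal X$ has Euclidean norm $1$.
   Context: $\mathbb{B}_d$ is the open unit ball of $\mathbb{R}^d$, $\mathbb S_{d-1}=\bar{\mathbb B}_d\setminus\mathbb B_d$. $\mathrm U_d$ is the spherical uniform distribution on $\mathbb B_d$, with density $u_d(\mathbf x)=\frac{1}{a_d|\mathbf x|^{d-1}}\mathbf 1[\mathbf x\in\mathbb B_d\setminus\{\mathbf 0\}]$, $a_d=2\pi^{d/2}/\Gamma(d/2)$. $\psi$ is the convex function on $\mathbb B_d$, normalized by $\psi(\mathbf 0)=0$, whose a.e. gradient pushes $\mathrm U_d$ forward to $\mathrm P$ (McCann), extended lsc to $\mathbb{R}^d$ ($+\infty$ outside $\bar{\mathbb B}_d$), and $\varphi(\mathbf x)=\sup_{\mathbf u\in\mathbb B_d}(\langle\mathbf u,\mathbf x\rangle-\psi(\mathbf u))$, so that $\nabla\varphi\sharp\mathrm P=\mathrm U_d$. $\partial\varphi$ denotes the subdifferential and $\partial\varphi(A)=\bigcup_{\mathbf x\in A}\partial\varphi(\mathbf x)$. Assumption A: for every $R>0$ there exist $0<\lambda_R\le\Lambda_R$ with $\lambda_R\le p(\mathbf x)\le\Lambda_R$ for all $\mathbf x\in\mathcal X$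 with $|\mathbf x|<R$. *)

theory Defs
  imports "HOL-Probability.Probability"
begin

text \<open>Surface area of the unit sphere in dimension d: a_d = 2 pi^(d/2) / Gamma(d/2).\<close>
definition sphere_area_const :: "nat \<Rightarrow> real" where
  "sphere_area_const d = 2 * pi powr (real d / 2) / Gamma (real d / 2)"

definition spherical_uniform :: "'a::euclidean_space measure" where
  "spherical_uniform = density lborel
     (\<lambda>x. if x \<in> ball 0 1 - {0}
          then ennreal (1 / (sphere_area_const DIM('a) * norm x ^ (DIM('a) - 1)))
          else 0)"

definition conj_ball :: "('a::euclidean_space \<Rightarrow> real) \<Rightarrow> 'a \<Rightarrow> real" where
  "conj_ball psi x = (SUP u\<in>ball 0 1. inner u x - psi u)"

definition subdifferential :: "('a::euclidean_space \<Rightarrow> real) \<Rightarrow> 'a \<Rightarrow> 'a set" where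
  "subdifferential f x = {y. \<forall>z. f z \<ge> f x + inner y (z - x)}"

end

theory Submission
  imports Defs
begin

text \<open>
  Suppose \<open>y \<in> \<partial>\<phi>(x\<^sub>0)\<close> with \<open>|y| = 1\<close>. Since \<open>\<phi>\<close> is 1-Lipschitz, all its subgradients lie in
  the closed unit ball, and monotonicity of \<open>\<partial>\<phi>\<close> then forces every subgradient at
  \<open>x\<^sub>0 + t y + w\<close> with \<open>t \<ge> e/2\<close> to lie within \<open>4|w|/e\<close> of \<open>y\<close>. As \<open>u \<in> \<partial>\<phi>(\<nabla>\<psi>(u))\<close>,
  the \<open>\<nabla>\<psi>\<close>-preimage of \<open>N\<close> disjoint balls of radius \<open>e/(4N)\<close> strung along the segment
  \<open>x\<^sub>0 + [e/2, e) y\<close> lies in the ball \<open>B(y, 1/N)\<close>, whose \<open>U\<^sub>d\<close>-mass is \<open>O(N\<^sup>-\<^sup>d)\<close> because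
  the density of \<open>U\<^sub>d\<close> is bounded away from the origin. By Assumption A, however, the
  \<open>P\<close>-mass of these balls is at least \<open>N \<lambda> \<omega>\<^sub>d (e/4N)\<^sup>d\<close>, so \<open>\<nabla>\<psi>\<sharp>U\<^sub>d = P\<close> fails for
  large \<open>N\<close>.
\<close>

lemma convex_on_has_derivative_ge:
  fixes f :: "'a::real_inner \<Rightarrow> real"
  assumes S: "convex S" "open S" and f: "convex_on S f" and u: "u \<in> S" and v: "v \<in> S"
    and d: "(f has_derivative (\<lambda>h. inner g h)) (at u)"
  shows "f u + inner g (v - u) \<le> f v"
proof -
  define l where "l = (\<lambda>s::real. u + s *\<^sub>R (v - u))"
  define A where "A = l -` S"
  have l_affine: "l (a *\<^sub>R x + b *\<^sub>R y) = a *\<^sub>R l x + b *\<^sub>R l y" if "a + b = 1" for a b x y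
    using that by (simp add: l_def algebra_simps) (metis scaleR_add_left scaleR_one)
  have "convex A"
  proof (rule convexI)
    fix x y a b :: real assume "x \<in> A" "y \<in> A" "0 \<le> a" "0 \<le> b" "a + b = 1"
    thus "a *\<^sub>R x + b *\<^sub>R y \<in> A"
      unfolding A_def vimage_eq l_affine[OF \<open>a + b = 1\<close>] using convexD[OF S(1)] by metis
  qed
  have "open A" unfolding A_def l_def
    by (rule open_vimage[OF S(2)]) (intro continuous_intros)
  have A01: "0 \<in> A" "1 \<in> A" using u v by (auto simp: A_def l_def)
  have "convex_on A (f \<circ> l)"
    unfolding convex_on_def
  proof (intro conjI \<open>convex A\<close> ballI allI impI)
    fix x y a b :: real assume "x \<in> A" "y \<in> A" "0 \<le> a" "0 \<le> b" "a + b = 1"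
    then have "f (a *\<^sub>R l x + b *\<^sub>R l y) \<le> a * f (l x) + b * f (l y)"
      using convex_onD[OF f, of b "l x" "l y"] unfolding A_def
      by (auto simp: eq_diff_eq[symmetric] dest: sym)
    then show "(f \<circ> l) (a *\<^sub>R x + b *\<^sub>R y) \<le> a * (f \<circ> l) x + b * (f \<circ> l) y"
      using l_affine[OF \<open>a + b = 1\<close>, of x y] by simp
  qed
  have dl: "(l has_derivative (\<lambda>s. s *\<^sub>R (v - u))) (at 0)"
    unfolding l_def by (auto intro!: derivative_eq_intros)
  have "l 0 = u" by (simp add: l_def)
  then have "(f \<circ> l has_derivative (\<lambda>h. inner g h) \<circ> (\<lambda>s. s *\<^sub>R (v - u))) (at 0)"
    using diff_chain_at[OF dl] d by simp
  then have "((f \<circ> l) has_field_derivative inner g (v - u)) (at 0 within A)"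
    unfolding has_field_derivative_def
    by (rule has_derivative_at_withinI[THEN has_derivative_eq_rhs]) (auto simp: algebra_simps)
  from convex_on_imp_above_tangent[OF \<open>convex_on A (f \<circ> l)\<close> convex_connected[OF \<open>convex A\<close>] _ A01(2) this]
  have "inner g (v - u) * (1 - 0) \<le> (f \<circ> l) 1 - (f \<circ> l) 0"
    using A01(1) \<open>open A\<close> by (simp add: interior_open)
  then show ?thesis by (simp add: l_def)
qed

lemma convex_on_bdd_below_of_has_derivative:
  fixes f :: "'a::real_inner \<Rightarrow> real"
  assumes S: "convex S" "open S" "bounded S" and f: "convex_on S f" and u: "u \<in> S"
    and d: "(f has_derivative (\<lambda>h. inner g h)) (at u)"
  shows "bdd_below (f ` S)"
proof -
  obtain B where B: "\<And>x. x \<in> S \<Longrightarrow> norm x \<le> B" using S(3) unfolding bounded_iff by blast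
  show ?thesis
  proof (rule bdd_belowI2)
    fix v assume v: "v \<in> S"
    have "- (norm g * norm (v - u)) \<le> inner g (v - u)"
      using norm_cauchy_schwarz[of g "u - v"] by (simp add: inner_diff_right norm_minus_commute)
    moreover have "norm g * norm (v - u) \<le> norm g * (2 * B)"
      using B[OF u] B[OF v] norm_triangle_ineq4[of v u] by (intro mult_left_mono) auto
    ultimately show "f u - norm g * (2 * B) \<le> f v"
      using convex_on_has_derivative_ge[OF S(1,2) f u v d] by linarith
  qed
qed

lemma conj_ball_ge:
  fixes psi :: "'a::euclidean_space \<Rightarrow> real"
  assumes "bdd_below (psi ` ball 0 1)" and u: "u \<in> ball 0 1"
  shows "inner u z - psi u \<le> conj_ball psi z"
proof -
  obtain M where M: "\<forall>x\<in>psi ` ball 0 1. M \<le> x"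
    using assms(1) unfolding bdd_below_def by blast
  have "inner u z - psi u \<le> norm z - M" if "u \<in> ball 0 1" for u
  proof -
    have "M \<le> psi u" using M that by blast
    moreover have "inner u z \<le> norm z"
      using norm_cauchy_schwarz[of u z] that mult_left_le_one_le[of "norm z" "norm u"]
      by (simp add: mult.commute)
    ultimately show ?thesis by linarith
  qed
  then have "bdd_above ((\<lambda>u. inner u z - psi u) ` ball 0 1)"
    by (intro bdd_aboveI2)
  then show ?thesis
    unfolding conj_ball_def by (rule cSUP_upper[OF u])
qed

lemma conj_ball_le:
  fixes psi :: "'a::euclidean_space \<Rightarrow> real"
  assumes "\<And>u. u \<in> ball 0 1 \<Longrightarrow> inner u z - psi u \<le> c"
  shows "conj_ball psi z \<le> c"
  unfolding conj_ball_def by (rule cSUP_least) (auto intro: assms)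

lemma conj_ball_lipschitz:
  fixes psi :: "'a::euclidean_space \<Rightarrow> real"
  assumes "bdd_below (psi ` ball 0 1)"
  shows "conj_ball psi z \<le> conj_ball psi z' + dist z z'"
proof (rule conj_ball_le)
  fix u :: 'a assume u: "u \<in> ball 0 1"
  have "inner u (z - z') \<le> dist z z'"
    using norm_cauchy_schwarz[of u "z - z'"] u mult_left_le_one_le[of "norm (z - z')" "norm u"]
    by (simp add: dist_norm mult.commute)
  then show "inner u z - psi u \<le> conj_ball psi z' + dist z z'"
    using conj_ball_ge[OF assms u, of z'] by (simp add: inner_diff_right)
qed

lemma subdifferential_norm_le_of_lipschitz:
  assumes lip: "\<And>z z'. f z \<le> f z' + L * dist z z'" and "0 \<le> L"
    and v: "v \<in> subdifferential f x"
  shows "norm v \<le> L"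
proof -
  have "f x + inner v (x + v - x) \<le> f (x + v)"
    using v unfolding subdifferential_def by blast
  also have "\<dots> \<le> f x + L * norm v"
    using lip[of "x + v" x] by (simp add: dist_norm)
  finally have "norm v ^ 2 \<le> L * norm v"
    by (simp add: power2_norm_eq_inner)
  then show ?thesis
    using \<open>0 \<le> L\<close> by (cases "norm v = 0") (auto simp: power2_eq_square)
qed

lemma has_derivative_in_subdifferential_conj_ball:
  fixes psi :: "'a::euclidean_space \<Rightarrow> real"
  assumes "bdd_below (psi ` ball 0 1)" and psi: "convex_on (ball 0 1) psi"
    and u: "u \<in> ball 0 1" and d: "(psi has_derivative (\<lambda>h. inner g h)) (at u)"
  shows "u \<in> subdifferential (conj_ball psi) g"
proof -
  have "conj_ball psi g \<le> inner u g - psi u"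
  proof (rule conj_ball_le)
    fix v :: 'a assume "v \<in> ball 0 1"
    from convex_on_has_derivative_ge[OF convex_ball open_ball psi u this d]
    show "inner v g - psi v \<le> inner u g - psi u"
      by (simp add: inner_diff_right inner_commute)
  qed
  moreover have "inner u z - psi u \<le> conj_ball psi z" for z
    by (rule conj_ball_ge[OF assms(1) u])
  ultimately have "conj_ball psi g + inner u (z - g) \<le> conj_ball psi z" for z
    by (smt (verit) inner_diff_right)
  then show ?thesis
    by (simp add: subdifferential_def)
qed

lemma subgradient_dist_le:
  assumes y: "y \<in> subdifferential f x0" "norm y = 1"
    and v: "v \<in> subdifferential f x" "norm v \<le> 1" and "t > 0"
  shows "t * dist v y \<le> 2 * dist x (x0 + t *\<^sub>R y)"
proof -
  define w where "w = x - (x0 + t *\<^sub>R y)"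
  have x: "x = x0 + t *\<^sub>R y + w" by (simp add: w_def)
  have "f x0 + inner y (x - x0) \<le> f x" "f x + inner v (x0 - x) \<le> f x0"
    using y(1) v(1) unfolding subdifferential_def by blast+
  moreover have yy: "inner y y = 1" using y(2) by (simp add: norm_eq_1)
  ultimately have monotone: "t * (1 - inner v y) \<le> inner (v - y) w"
    unfolding x by (simp add: inner_add_right inner_diff_right inner_diff_left inner_commute algebra_simps)
  have "dist v y ^ 2 = inner v v - 2 * inner v y + 1"
    by (simp add: dist_norm power2_norm_eq_inner inner_diff_left inner_diff_right yy inner_commute)
  also have "inner v v \<le> 1"
    using v(2) by (metis norm_eq_sqrt_inner real_sqrt_le_1_iff)
  finally have "dist v y ^ 2 \<le> 2 * (1 - inner v y)" by simp
  then have "t * dist v y ^ 2 \<le> 2 * (t * (1 - inner v y))"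
    using \<open>t > 0\<close> by (metis mult.left_commute mult_le_cancel_left_pos)
  also have "\<dots> \<le> 2 * (dist v y * norm w)"
    using monotone norm_cauchy_schwarz[of "v - y" w] by (simp add: dist_norm)
  finally have "dist v y * (t * dist v y) \<le> dist v y * (2 * norm w)"
    by (simp add: power2_eq_square algebra_simps)
  then show ?thesis
    by (cases "dist v y = 0") (simp_all add: w_def dist_norm norm_minus_commute)
qed

definition bead :: "'a::real_normed_vector \<Rightarrow> 'a \<Rightarrow> real \<Rightarrow> nat \<Rightarrow> nat \<Rightarrow> 'a set" where
  "bead x y e N k = ball (x + (e / 2 + e * real k / (2 * real N)) *\<^sub>R y) (e / (4 * real N))"

lemma bead_subset_ball:
  assumes "norm y = 1" "e > 0" "k < N"
  shows "bead x y e N k \<subseteq> ball x e"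
proof
  fix z assume z: "z \<in> bead x y e N k"
  have "2 + 4 * real k < 4 * real N" using \<open>k < N\<close> by linarith
  then have "e * (2 + 4 * real k) < e * (4 * real N)"
    using \<open>e > 0\<close> by (rule mult_strict_left_mono)
  then have "e * k / (2 * N) + e / (4 * N) < e / 2"
    using \<open>k < N\<close> by (simp add: field_simps)
  moreover have "dist x z \<le> (e / 2 + e * k / (2 * N)) + dist (x + (e / 2 + e * k / (2 * N)) *\<^sub>R y) z"
    using dist_triangle[of x z "x + (e / 2 + e * k / (2 * N)) *\<^sub>R y"] assms
    by (simp add: dist_norm)
  ultimately show "z \<in> ball x e"
    using z by (simp add: bead_def)
qed

lemma disjoint_family_bead:
  assumes "norm y = 1" "e > 0"
  shows "disjoint_family (bead x y e N)"
  unfolding disjoint_family_on_def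
proof (intro ballI impI)
  fix k j :: nat assume "k \<noteq> j"
  show "bead x y e N k \<inter> bead x y e N j = {}"
  proof (cases "N = 0")
    case False
    have "1 \<le> \<bar>real k - real j\<bar>" using \<open>k \<noteq> j\<close> by linarith
    from mult_left_mono[OF this, of "e / (2 * N)"]
    have "e / (2 * N) \<le> e / (2 * N) * \<bar>real k - real j\<bar>"
      using \<open>e > 0\<close> by simp
    also have "\<dots> = \<bar>e / (2 * N) * (real k - real j)\<bar>"
      using \<open>e > 0\<close> by (simp add: abs_mult)
    also have "\<dots> = dist (x + (e / 2 + e * k / (2 * N)) *\<^sub>R y) (x + (e / 2 + e * j / (2 * N)) *\<^sub>R y)"
      using assms by (simp add: dist_norm right_diff_distrib flip: scaleR_diff_left)
    finally show ?thesis
      using False unfolding bead_def by (intro disjoint_ballI) (simp add: field_simps)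
  qed (simp add: bead_def)
qed

lemma subgradient_on_bead_dist_less:
  assumes y: "y \<in> subdifferential f x0" "norm y = 1"
    and v: "v \<in> subdifferential f x" "norm v \<le> 1"
    and x: "x \<in> bead x0 y e N k" and "e > 0"
  shows "dist v y < 1 / real N"
proof -
  define t where "t = e / 2 + e * k / (2 * N)"
  have "N > 0"
    using x by (cases N) (auto simp: bead_def)
  have "e / 2 \<le> t" using \<open>e > 0\<close> by (simp add: t_def)
  then have "e / 2 * dist v y \<le> t * dist v y"
    by (intro mult_right_mono) auto
  also have "\<dots> \<le> 2 * dist x (x0 + t *\<^sub>R y)"
    using subgradient_dist_le[OF y v] \<open>e / 2 \<le> t\<close> \<open>e > 0\<close> by simp
  also have "\<dots> < e / (2 * N)"
    using x by (simp add: bead_def t_def dist_commute)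
  finally show ?thesis
    using \<open>e > 0\<close> \<open>N > 0\<close> by (simp add: field_simps)
qed

lemma sets_spherical_uniform [simp]: "sets spherical_uniform = sets borel"
  by (simp add: spherical_uniform_def)

lemma AE_spherical_uniform_ball:
  assumes "AE u in lborel. u \<in> ball 0 1 \<longrightarrow> Q u"
  shows "AE u in spherical_uniform. u \<in> ball 0 1 \<and> Q u"
  unfolding spherical_uniform_def using assms
  by (subst AE_density) (auto elim!: eventually_mono)

lemma emeasure_spherical_uniform_ball_le:
  fixes y :: "'a::euclidean_space"
  assumes "norm y = 1" "0 \<le> \<rho>" "\<rho> \<le> 1 / 2"
  shows "emeasure spherical_uniform (ball y \<rho>)
           \<le> ennreal (2 ^ (DIM('a) - 1) / sphere_area_const DIM('a) * unit_ball_vol DIM('a) * \<rho> ^ DIM('a))"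
proof -
  define d where "d = DIM('a)"
  define K where "K = 2 ^ (d - 1) / sphere_area_const d"
  have "sphere_area_const d > 0"
    using DIM_positive[where 'a='a] by (simp add: d_def sphere_area_const_def Gamma_real_pos)
  then have "K \<ge> 0" by (simp add: K_def)
  have density_le: "1 / (sphere_area_const d * norm x ^ (d - 1)) \<le> K" if "x \<in> ball y \<rho>" for x
  proof -
    have x: "1 / 2 \<le> norm x"
      using that assms norm_triangle_ineq2[of y x] by (simp add: dist_norm)
    then have "(1 / 2) ^ (d - 1) \<le> norm x ^ (d - 1)"
      by (intro power_mono) auto
    then have "1 / (sphere_area_const d * norm x ^ (d - 1)) \<le> 1 / (sphere_area_const d * (1 / 2) ^ (d - 1))"
      using \<open>sphere_area_const d > 0\<close> x
      by (intro divide_left_mono mult_left_mono mult_pos_pos zero_less_power) auto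
    then show ?thesis
      by (simp add: K_def power_one_over)
  qed
  have "emeasure spherical_uniform (ball y \<rho>)
          = (\<integral>\<^sup>+ x. (if x \<in> ball 0 1 - {0} then ennreal (1 / (sphere_area_const d * norm x ^ (d - 1))) else 0)
                   * indicator (ball y \<rho>) x \<partial>lborel)"
    unfolding spherical_uniform_def d_def by (rule emeasure_density) auto
  also have "\<dots> \<le> (\<integral>\<^sup>+ x. ennreal K * indicator (ball y \<rho>) x \<partial>lborel)"
    using density_le \<open>K \<ge> 0\<close> by (intro nn_integral_mono) (auto simp: indicator_def ennreal_leI)
  also have "\<dots> = ennreal K * emeasure lborel (ball y \<rho>)"
    by (rule nn_integral_cmult_indicator) simp
  also have "\<dots> = ennreal (K * unit_ball_vol d * \<rho> ^ d)"
    using \<open>K \<ge> 0\<close> \<open>0 \<le> \<rho>\<close> by (simp add: emeasure_ball d_def ennreal_mult' mult.assoc)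
  finally show ?thesis
    by (simp add: K_def d_def)
qed

lemma emeasure_density_ge:
  assumes "A \<in> sets M" "p \<in> borel_measurable M" "\<And>x. x \<in> A \<Longrightarrow> lam \<le> p x"
  shows "ennreal lam * emeasure M A \<le> emeasure (density M (\<lambda>x. ennreal (p x))) A"
proof -
  have "ennreal lam * emeasure M A = (\<integral>\<^sup>+ x. ennreal lam * indicator A x \<partial>M)"
    using assms(1) by (rule nn_integral_cmult_indicator[symmetric])
  also have "\<dots> \<le> (\<integral>\<^sup>+ x. ennreal (p x) * indicator A x \<partial>M)"
    using assms(3) by (intro nn_integral_mono) (auto simp: indicator_def ennreal_leI)
  also have "\<dots> = emeasure (density M (\<lambda>x. ennreal (p x))) A"
    using assms(1,2) by (intro emeasure_density[symmetric]) auto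
  finally show ?thesis .
qed

lemma emeasure_distr_le_AE:
  assumes "f \<in> measurable M N" "A \<in> sets N" "C \<in> sets M" "AE x in M. f x \<in> A \<longrightarrow> x \<in> C"
  shows "emeasure (distr M N f) A \<le> emeasure M C"
  using assms by (subst emeasure_distr) (auto intro!: emeasure_mono_AE elim!: eventually_mono)

lemma AE_lborel_ex_in_open:
  fixes S :: "'a::euclidean_space set"
  assumes "open S" "S \<noteq> {}" and Q: "AE x in lborel. x \<in> S \<longrightarrow> Q x"
  shows "\<exists>x\<in>S. Q x"
proof (rule ccontr)
  obtain c r where "r > 0" "ball c r \<subseteq> S"
    using assms(1,2) open_contains_ball by blast
  assume "\<not> (\<exists>x\<in>S. Q x)"
  then have "AE x in lborel. x \<notin> ball c r"
    using Q \<open>ball c r \<subseteq> S\<close> by (auto elim!: eventually_mono)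
  then have "emeasure lborel (ball c r) = 0"
    by (subst AE_iff_measurable[symmetric, where P = "\<lambda>x. x \<notin> ball c r"]) auto
  with \<open>r > 0\<close> show False
    using unit_ball_vol_pos[of "DIM('a)"] by (simp add: emeasure_ball)
qed

lemma convex_on_ball_bdd_below_of_AE_has_derivative:
  fixes psi :: "'a::euclidean_space \<Rightarrow> real"
  assumes "convex_on (ball 0 1) psi"
    and "AE u in lborel. u \<in> ball 0 1 \<longrightarrow> (psi has_derivative (\<lambda>h. inner (grad_psi u) h)) (at u)"
  shows "bdd_below (psi ` ball 0 1)"
proof -
  obtain u where "u \<in> ball 0 1" "(psi has_derivative (\<lambda>h. inner (grad_psi u) h)) (at u)"
    using AE_lborel_ex_in_open[OF open_ball _ assms(2)] by auto
  then show ?thesis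
    by (rule convex_on_bdd_below_of_has_derivative[OF convex_ball open_ball bounded_ball assms(1)])
qed

lemma emeasure_density_beads_ge:
  fixes p :: "'a::euclidean_space \<Rightarrow> real"
  assumes "norm y = 1" "e > 0" and p: "p \<in> borel_measurable borel"
    and lam: "\<forall>x\<in>ball c e. lam \<le> p x" "lam \<ge> 0"
  shows "ennreal (real N * (lam * (unit_ball_vol DIM('a) * (e / (4 * real N)) ^ DIM('a))))
           \<le> emeasure (density lborel (\<lambda>x. ennreal (p x))) (\<Union>k<N. bead c y e N k)"
proof -
  have bead_ge: "ennreal (lam * (unit_ball_vol DIM('a) * (e / (4 * real N)) ^ DIM('a)))
                   \<le> emeasure (density lborel (\<lambda>x. ennreal (p x))) (bead c y e N k)" if "k < N" for k
  proof -
    have "lam \<le> p x" if "x \<in> bead c y e N k" for x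
      using lam(1) bead_subset_ball[OF assms(1,2) \<open>k < N\<close>, where x = c] that by blast
    then have "ennreal lam * emeasure lborel (bead c y e N k)
            \<le> emeasure (density lborel (\<lambda>x. ennreal (p x))) (bead c y e N k)"
      using p by (intro emeasure_density_ge) (simp_all add: bead_def)
    then show ?thesis
      using \<open>e > 0\<close> lam(2) by (simp add: bead_def emeasure_ball ennreal_mult)
  qed
  have "ennreal (real N * (lam * (unit_ball_vol DIM('a) * (e / (4 * real N)) ^ DIM('a))))
          = (\<Sum>k<N. ennreal (lam * (unit_ball_vol DIM('a) * (e / (4 * real N)) ^ DIM('a))))"
    using \<open>e > 0\<close> lam(2) by (simp add: ennreal_mult ennreal_of_nat_eq_real_of_nat)
  also have "\<dots> \<le> (\<Sum>k<N. emeasure (density lborel (\<lambda>x. ennreal (p x))) (bead c y e N k))"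
    by (intro sum_mono bead_ge) simp
  also have "\<dots> = emeasure (density lborel (\<lambda>x. ennreal (p x))) (\<Union>k<N. bead c y e N k)"
    using disjoint_family_bead[OF assms(1,2)]
    by (intro sum_emeasure) (auto simp: bead_def disjoint_family_on_def)
  finally show ?thesis .
qed

lemma emeasure_distr_gradient_beads_le:
  fixes psi :: "'a::euclidean_space \<Rightarrow> real"
  assumes "bdd_below (psi ` ball 0 1)" and psi: "convex_on (ball 0 1) psi"
    and grad: "AE u in lborel. u \<in> ball 0 1 \<longrightarrow> (psi has_derivative (\<lambda>h. inner (grad_psi u) h)) (at u)"
    and grad_meas: "grad_psi \<in> borel_measurable borel"
    and y: "y \<in> subdifferential (conj_ball psi) x0" "norm y = 1" and "e > 0" "N \<ge> 2"
  shows "emeasure (distr spherical_uniform borel grad_psi) (\<Union>k<N. bead x0 y e N k)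
           \<le> ennreal (2 ^ (DIM('a) - 1) / sphere_area_const DIM('a) * unit_ball_vol DIM('a) * (1 / real N) ^ DIM('a))"
proof -
  have "emeasure (distr spherical_uniform borel grad_psi) (\<Union>k<N. bead x0 y e N k)
          \<le> emeasure spherical_uniform (ball y (1 / real N))"
  proof (rule emeasure_distr_le_AE)
    show "AE u in spherical_uniform. grad_psi u \<in> (\<Union>k<N. bead x0 y e N k) \<longrightarrow> u \<in> ball y (1 / real N)"
      using AE_spherical_uniform_ball[OF grad]
    proof eventually_elim
      case (elim u)
      then have u: "u \<in> subdifferential (conj_ball psi) (grad_psi u)"
        using has_derivative_in_subdifferential_conj_ball[OF assms(1) psi] by blast
      have "norm u \<le> 1"
        using elim by simp
      show ?case
        using subgradient_on_bead_dist_less[OF y u \<open>norm u \<le> 1\<close> _ \<open>e > 0\<close>] by (auto simp: dist_commute)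
    qed
  next
    show "grad_psi \<in> measurable spherical_uniform borel"
      using grad_meas by (simp add: measurable_cong_sets[OF sets_spherical_uniform refl])
  qed (auto simp: bead_def)
  also have "\<dots> \<le> ennreal (2 ^ (DIM('a) - 1) / sphere_area_const DIM('a) * unit_ball_vol DIM('a) * (1 / real N) ^ DIM('a))"
    using \<open>N \<ge> 2\<close> by (intro emeasure_spherical_uniform_ball_le y(2)) auto
  finally show ?thesis .
qed

theorem lemma2p2:
  fixes p :: "'a::euclidean_space \<Rightarrow> real"
    and X :: "'a set"
    and psi :: "'a \<Rightarrow> real"
    and grad_psi :: "'a \<Rightarrow> 'a"
  assumes p_meas: "p \<in> borel_measurable borel"
    and p_nonneg: "\<And>x. p x \<ge> 0"
    and P_prob: "prob_space (density lborel (\<lambda>x. ennreal (p x)))"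
    and p_supp: "\<And>x. x \<notin> X \<Longrightarrow> p x = 0"
    and X_convex: "convex X"
    and X_open: "open X"
    and assmA: "\<And>R. R > 0 \<Longrightarrow> \<exists>lam Lam. 0 < lam \<and> lam \<le> Lam \<and>
                   (\<forall>x\<in>X. norm x < R \<longrightarrow> lam \<le> p x \<and> p x \<le> Lam)"
    and psi_convex: "convex_on (ball 0 1) psi"
    and psi_zero: "psi 0 = 0"
    and grad: "AE u in lborel. u \<in> ball 0 1 \<longrightarrow>
                 (psi has_derivative (\<lambda>h. inner (grad_psi u) h)) (at u)"
    and grad_meas: "grad_psi \<in> borel_measurable borel"
    and push: "distr spherical_uniform borel grad_psi = density lborel (\<lambda>x. ennreal (p x))"
  shows "\<forall>x\<in>X. \<forall>y\<in>subdifferential (conj_ball psi) x. norm y \<noteq> 1"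
proof (intro ballI notI)
  fix x0 y assume "x0 \<in> X" and y: "y \<in> subdifferential (conj_ball psi) x0" "norm y = 1"
  have bdd: "bdd_below (psi ` ball 0 1)"
    by (rule convex_on_ball_bdd_below_of_AE_has_derivative[OF psi_convex grad])
  obtain e where "e > 0" "ball x0 e \<subseteq> X"
    using X_open \<open>x0 \<in> X\<close> open_contains_ball by blast
  then obtain lam Lam where "0 < lam" and lam_X: "\<forall>x\<in>X. norm x < norm x0 + e \<longrightarrow> lam \<le> p x"
    using assmA[of "norm x0 + e"] by (auto simp: add_nonneg_pos)
  have lam: "\<forall>x\<in>ball x0 e. lam \<le> p x"
  proof
    fix x assume "x \<in> ball x0 e"
    moreover have "norm x < norm x0 + e"
      using \<open>x \<in> ball x0 e\<close> norm_triangle_ineq2[of x x0] by (simp add: dist_norm norm_minus_commute)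
    ultimately show "lam \<le> p x"
      using lam_X \<open>ball x0 e \<subseteq> X\<close> by blast
  qed
  define K where "K = 2 ^ (DIM('a) - 1) / sphere_area_const DIM('a) * (4 / e) ^ DIM('a)"
  obtain n :: nat where "K < n * lam"
    using ex_less_of_nat_mult[OF \<open>0 < lam\<close>] by blast
  define N where "N = n + 2"
  have "N \<ge> 2" "K < N * lam"
    using \<open>K < n * lam\<close> \<open>0 < lam\<close> by (simp_all add: N_def distrib_right)
  define r where "r = e / (4 * real N)"
  have "ennreal (real N * (lam * (unit_ball_vol DIM('a) * r ^ DIM('a))))
          \<le> ennreal (2 ^ (DIM('a) - 1) / sphere_area_const DIM('a) * unit_ball_vol DIM('a) * (1 / real N) ^ DIM('a))"
    using emeasure_density_beads_ge[where c = x0 and N = N, OF y(2) \<open>e > 0\<close> p_meas lam less_imp_le[OF \<open>0 < lam\<close>]]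
      emeasure_distr_gradient_beads_le[OF bdd psi_convex grad grad_meas y \<open>e > 0\<close> \<open>N \<ge> 2\<close>]
    unfolding push r_def using \<open>0 < lam\<close> by order
  then have "real N * lam * (unit_ball_vol DIM('a) * r ^ DIM('a)) \<le> K * (unit_ball_vol DIM('a) * r ^ DIM('a))"
    using \<open>e > 0\<close> \<open>N \<ge> 2\<close> \<open>0 < lam\<close>
    by (simp add: K_def r_def ennreal_le_iff sphere_area_const_def power_divide field_simps)
  then show False
    using \<open>K < N * lam\<close> \<open>e > 0\<close> \<open>N \<ge> 2\<close> by (simp add: r_def mult_le_cancel_right)
qed

end
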